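(* For all $m,n\ge1$ and all $\tilde x=(x_1,\dots,x_m)\in\mathbb{N}^m$, $\tilde y=(y_1,\dots,y_n)\in\mathbb{N}^n$, $$\log 2\le \frac{\mu(I(\tilde x,\tilde y))}{\mu(I(\tilde x))\,\mu(I(\tilde y))}\le 2\log 2,$$ where $(\tilde x,\tilde y)=(x_1,\dots,x_m,y_1,\dots,y_n)$. Moreover both bounds are optimal (i.e., the constants $\log 2$ and $2\log2$ cannot be replaced by any larger, respectively smaller, constants).
   Context: $\mu$ is the Gauss measure on $(0,1)$, $d\mu(\omega)=\frac{d\omega}{(\log 2)(1+\omega)}$. For $(a_1,\dots,a_n)\in\mathbb{N}^n$, the cylinder $I(a_1,\dots,a_n)$ is the set of $\omega\in(0,1)$ whose continued fraction expansion $\omega=\cfrac{1}{a_1(\omega)+\cfrac{1}{a_2(\omega)+\cdots}}$ begins with $a_1,\dots,a_n$. *)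

theory Defs
  imports "HOL-Analysis.Analysis"
begin

text \<open>Gauss map T(x) = 1/x - floor(1/x) on (0,1); the n-th partial quotient
 (0-indexed) of x is a_{n+1}(x) = floor(1 / T^n(x)).\<close>
definition gauss_map :: "real \<Rightarrow> real" where
  "gauss_map x = frac (1 / x)"

definition cf_digit :: "nat \<Rightarrow> real \<Rightarrow> int" where
  "cf_digit k x = \<lfloor>1 / (gauss_map ^^ k) x\<rfloor>"

definition cylinder :: "nat list \<Rightarrow> real set" where
  "cylinder as = {w \<in> {0<..<1}. \<forall>i < length as. cf_digit i w = int (as ! i)}"

definition gauss_measure :: "real measure" where
  "gauss_measure = density lborel
     (\<lambda>w. ennreal (indicator {0<..<1} w / (ln 2 * (1 + w))))"

definition gauss_ratio :: "nat list \<Rightarrow> nat list \<Rightarrow> real" where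
  "gauss_ratio xs ys = measure gauss_measure (cylinder (xs @ ys)) /
      (measure gauss_measure (cylinder xs) * measure gauss_measure (cylinder ys))"

definition admissible :: "nat list \<Rightarrow> bool" where
  "admissible xs \<longleftrightarrow> length xs \<ge> 1 \<and> (\<forall>i < length xs. xs ! i \<ge> 1)"

end

theory Submission
  imports Defs "HOL-Real_Asymp.Real_Asymp"
begin

text \<open>Up to endpoints, the cylinder I(a_1,\<dots>,a_n) is the image of (0,1) under the inverse branch
  \<psi>(t) = (p_n + t p_{n-1}) / (q_n + t q_{n-1}), and the branch of a concatenation is the composition
  of the branches. As the Gauss measure of an interval is the increment of ln(1+t) / ln 2, \<mu>(I(x,y)) is
  the increment of ln(1 + \<psi>_x) between the endpoints of I(y). Unimodularity of the convergents makes
  the derivative of ln(1 + \<psi>_x) equal, up to sign, to 1 / ((q + t q')((p + q) + t (p' + q'))), and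
  on [0,1] its quotient by 1/(1+t) lies between ln 2 \<cdot> \<mu>(I(x)) and 2 ln 2 \<cdot> \<mu>(I(x)). The ratio
  tends to ln 2 for x = y = (n) and to 2 ln 2 for x = (n), y = (1,n).\<close>

lemma cf_digit_0: "cf_digit 0 w = \<lfloor>1 / w\<rfloor>"
  unfolding cf_digit_def by simp

lemma cf_digit_Suc: "cf_digit (Suc i) w = cf_digit i (gauss_map w)"
  unfolding cf_digit_def by (simp only: funpow_Suc_right comp_def)

lemma cylinder_singleton: "cylinder [a] = {w \<in> {0<..<1}. \<lfloor>1 / w\<rfloor> = int a}"
  unfolding cylinder_def by (auto simp: cf_digit_0)

lemma cylinder_Cons:
  assumes "a \<noteq> 0" and "as \<noteq> []" and "0 \<notin> set as"
  shows "cylinder (a # as) = (\<lambda>u. 1 / (real a + u)) ` cylinder as"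
proof (intro equalityI subsetI)
  fix w assume "w \<in> cylinder (a # as)"
  then have w: "0 < w" "w < 1" and digits: "\<And>i. i < Suc (length as) \<Longrightarrow> cf_digit i w = int ((a # as) ! i)"
    unfolding cylinder_def by auto
  have floor_w: "\<lfloor>1 / w\<rfloor> = int a"
    using digits[of 0] by (simp add: cf_digit_0)
  define u where "u = gauss_map w"
  have u_digits: "cf_digit i u = int (as ! i)" if "i < length as" for i
    using digits[of "Suc i"] that by (simp add: cf_digit_Suc u_def)
  have "as ! 0 \<noteq> 0"
    using assms(2,3) by (metis length_greater_0_conv nth_mem)
  with u_digits[of 0] assms(2) have "u \<noteq> 0"
    by (auto simp: cf_digit_0)
  moreover have "0 \<le> u" "u < 1"
    unfolding u_def gauss_map_def by (auto simp: frac_lt_1)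
  ultimately have "u \<in> cylinder as"
    unfolding cylinder_def using u_digits by auto
  moreover have "w = 1 / (real a + u)"
    using floor_w w unfolding u_def gauss_map_def frac_def by simp
  ultimately show "w \<in> (\<lambda>u. 1 / (real a + u)) ` cylinder as"
    by blast
next
  fix w assume "w \<in> (\<lambda>u. 1 / (real a + u)) ` cylinder as"
  then obtain u where u: "0 < u" "u < 1" and w: "w = 1 / (real a + u)"
    and u_digits: "\<And>i. i < length as \<Longrightarrow> cf_digit i u = int (as ! i)"
    unfolding cylinder_def by auto
  have a: "real a \<ge> 1"
    using assms(1) by simp
  have inv_w: "1 / w = real a + u"
    using w u a by simp
  have floor_w: "\<lfloor>1 / w\<rfloor> = int a"
    unfolding inv_w using u by (simp add: floor_eq_iff)
  have "gauss_map w = u"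
    unfolding gauss_map_def frac_def using floor_w inv_w by simp
  then have "cf_digit i w = int ((a # as) ! i)" if "i < Suc (length as)" for i
    using that floor_w u_digits by (cases i) (auto simp: cf_digit_0 cf_digit_Suc)
  moreover have "0 < w" "w < 1"
    unfolding w using u a by (auto simp: field_simps)
  ultimately show "w \<in> cylinder (a # as)"
    unfolding cylinder_def by auto
qed

text \<open>The inverse branch of the n-th iterate of the Gauss map on the cylinder of
  a_1,\<dots>,a_n, i.e.\ t \<mapsto> [0; a_1, \<dots>, a_{n-1}, a_n + t].\<close>
primrec cf_branch :: "nat list \<Rightarrow> real \<Rightarrow> real" where
  "cf_branch [] t = t"
| "cf_branch (a # as) t = 1 / (real a + cf_branch as t)"

lemma cf_branch_append: "cf_branch (xs @ ys) t = cf_branch xs (cf_branch ys t)"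
  by (induct xs) auto

lemma cf_branch_bounds:
  assumes "0 \<notin> set zs" "0 \<le> t" "t \<le> 1"
  shows "0 \<le> cf_branch zs t" "cf_branch zs t \<le> 1"
  using assms by (induct zs) auto

lemma closed_segment_real_iff: "w \<in> closed_segment x y \<longleftrightarrow> (w - x) * (w - y) \<le> (0::real)"
  by (cases "x \<le> y") (auto simp: closed_segment_eq_real_ivl mult_le_0_iff)

lemma open_segment_real_iff: "w \<in> open_segment x y \<longleftrightarrow> (w - x) * (w - y) < (0::real)"
  by (cases "x \<le> y") (auto simp: open_segment_eq_real_ivl mult_less_0_iff)

lemma inverse_shift_diff_mult:
  fixes a u x y :: real
  assumes "0 < a" "0 \<le> u" "0 \<le> x" "0 \<le> y"
  shows "(1 / (a + u) - 1 / (a + x)) * (1 / (a + u) - 1 / (a + y))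
       = (u - x) * (u - y) / ((a + u)\<^sup>2 * (a + x) * (a + y))"
  using assms by (simp add: field_simps power2_eq_square)

lemma cylinder_singleton_segments:
  assumes "a \<noteq> 0"
  shows "open_segment (1 / real a) (1 / (real a + 1)) \<subseteq> cylinder [a]"
    and "cylinder [a] \<subseteq> closed_segment (1 / real a) (1 / (real a + 1))"
proof -
  have a: "real a \<ge> 1"
    using assms by simp
  have ends: "1 / (real a + 1) < 1 / real a" "1 / real a \<le> 1"
    using a by (auto simp: field_simps)
  show "open_segment (1 / real a) (1 / (real a + 1)) \<subseteq> cylinder [a]"
  proof
    fix w assume "w \<in> open_segment (1 / real a) (1 / (real a + 1))"
    then have w: "1 / (real a + 1) < w" "w < 1 / real a"
      using ends by (auto simp: open_segment_eq_real_ivl)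
    moreover have "0 < w"
      using w(1) a by (simp add: less_trans[OF _ w(1)])
    ultimately have "real a < 1 / w" "1 / w < real a + 1"
      using a by (auto simp: field_simps)
    moreover have "w < 1"
      using w(2) ends(2) by linarith
    ultimately show "w \<in> cylinder [a]"
      using \<open>0 < w\<close> by (simp add: cylinder_singleton floor_eq_iff)
  qed
  show "cylinder [a] \<subseteq> closed_segment (1 / real a) (1 / (real a + 1))"
  proof
    fix w assume "w \<in> cylinder [a]"
    then have "0 < w" "real a \<le> 1 / w" "1 / w < real a + 1"
      by (auto simp: cylinder_singleton floor_eq_iff)
    then have "1 / (real a + 1) \<le> w" "w \<le> 1 / real a"
      using a by (auto simp: field_simps)
    then show "w \<in> closed_segment (1 / real a) (1 / (real a + 1))"
      using ends by (simp add: closed_segment_eq_real_ivl)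
  qed
qed

lemma inverse_shift_image_segments:
  fixes a x y :: real
  defines "\<phi> \<equiv> \<lambda>u. 1 / (a + u)"
  assumes a: "0 < a" and xy: "0 \<le> x" "0 \<le> y" and S: "S \<subseteq> {0..}"
  shows "open_segment x y \<subseteq> S \<Longrightarrow> open_segment (\<phi> x) (\<phi> y) \<subseteq> \<phi> ` S"
    and "S \<subseteq> closed_segment x y \<Longrightarrow> \<phi> ` S \<subseteq> closed_segment (\<phi> x) (\<phi> y)"
proof -
  have sign: "(\<phi> u - \<phi> x) * (\<phi> u - \<phi> y) = (u - x) * (u - y) / ((a + u)\<^sup>2 * (a + x) * (a + y))"
    and denom_pos: "(a + u)\<^sup>2 * (a + x) * (a + y) > 0" if "0 \<le> u" for u
    unfolding \<phi>_def using inverse_shift_diff_mult[of a u x y] that a xy by auto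
  show "open_segment (\<phi> x) (\<phi> y) \<subseteq> \<phi> ` S" if "open_segment x y \<subseteq> S"
  proof
    fix w assume w_seg: "w \<in> open_segment (\<phi> x) (\<phi> y)"
    have "0 < \<phi> x" "\<phi> x \<le> 1 / a" "0 < \<phi> y" "\<phi> y \<le> 1 / a"
      unfolding \<phi>_def using a xy by (auto simp: field_simps)
    then have w: "0 < w" "w < 1 / a"
      using w_seg by (auto simp: open_segment_eq_real_ivl split: if_splits)
    define u where "u = 1 / w - a"
    have "u > 0" and w_eq: "w = \<phi> u"
      using w a by (auto simp: u_def \<phi>_def field_simps)
    then have "(u - x) * (u - y) < 0"
      using w_seg sign[of u] denom_pos[of u] by (simp add: open_segment_real_iff divide_less_0_iff)
    then show "w \<in> \<phi> ` S"
      unfolding w_eq using that by (auto simp: open_segment_real_iff)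
  qed
  show "\<phi> ` S \<subseteq> closed_segment (\<phi> x) (\<phi> y)" if "S \<subseteq> closed_segment x y"
  proof
    fix w assume "w \<in> \<phi> ` S"
    then obtain u where u: "u \<in> S" and w_eq: "w = \<phi> u"
      by blast
    have "(u - x) * (u - y) \<le> 0"
      using that u by (auto simp: closed_segment_real_iff)
    then show "w \<in> closed_segment (\<phi> x) (\<phi> y)"
      unfolding w_eq using S u sign[of u] denom_pos[of u]
      by (auto simp: closed_segment_real_iff divide_le_0_iff)
  qed
qed

lemma cylinder_segments:
  assumes "zs \<noteq> []" "0 \<notin> set zs"
  shows "open_segment (cf_branch zs 0) (cf_branch zs 1) \<subseteq> cylinder zs
       \<and> cylinder zs \<subseteq> closed_segment (cf_branch zs 0) (cf_branch zs 1)"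
  using assms
proof (induct zs rule: list_nonempty_induct)
  case (single a)
  then show ?case
    using cylinder_singleton_segments[of a] by simp
next
  case (cons a zs)
  then have "cylinder (a # zs) = (\<lambda>u. 1 / (real a + u)) ` cylinder zs"
    by (simp add: cylinder_Cons)
  moreover have "cylinder zs \<subseteq> {0..}"
    by (auto simp: cylinder_def)
  ultimately show ?case
    using cons inverse_shift_image_segments[of "real a" "cf_branch zs 0" "cf_branch zs 1" "cylinder zs"]
      cf_branch_bounds[of zs] by auto
qed

lemma gauss_density_measurable [measurable]:
  "(\<lambda>w. ennreal (indicator {0<..<1} w / (ln 2 * (1 + w)))) \<in> borel_measurable lborel"
  by measurable

lemma sets_gauss_measure [simp]: "sets gauss_measure = sets lborel"
  unfolding gauss_measure_def by simp

lemma finite_imp_null_set_gauss_measure: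
  assumes "finite N"
  shows "N \<in> null_sets gauss_measure"
proof -
  have "N \<in> null_sets lborel"
    using assms by (rule finite_imp_null_set_lborel)
  then have "AE x in lborel. x \<notin> N"
    by (rule AE_not_in)
  then show ?thesis
    unfolding gauss_measure_def null_sets_density_iff[OF gauss_density_measurable]
    using \<open>N \<in> null_sets lborel\<close> by (auto elim: eventually_mono)
qed

lemma emeasure_gauss_measure_Icc:
  assumes "0 \<le> l" "l \<le> r" "r \<le> 1"
  shows "emeasure gauss_measure {l..r} = ennreal ((ln (1 + r) - ln (1 + l)) / ln 2)"
proof -
  have "emeasure gauss_measure {l..r} =
     (\<integral>\<^sup>+ x. ennreal (indicator {0<..<1} x / (ln 2 * (1 + x))) * indicator {l..r} x \<partial>lborel)"
    unfolding gauss_measure_def by (subst emeasure_density) auto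
  also have "\<dots> = (\<integral>\<^sup>+ x. ennreal (1 / (ln 2 * (1 + x))) * indicator {l..r} x \<partial>lborel)"
  proof (rule nn_integral_cong_AE)
    have "AE x in lborel. x \<notin> {0, 1::real}"
      by (intro AE_not_in finite_imp_null_set_lborel) simp
    then show "AE x in lborel. ennreal (indicator {0<..<1} x / (ln 2 * (1 + x))) * indicator {l..r} x =
        ennreal (1 / (ln 2 * (1 + x))) * indicator {l..r} x"
      by (rule eventually_mono) (use assms in \<open>auto split: split_indicator\<close>)
  qed
  also have "\<dots> = ennreal (ln (1 + r) / ln 2 - ln (1 + l) / ln 2)"
  proof (rule nn_integral_FTC_Icc)
    fix x assume "x \<in> {l..r}"
    then have "1 + x > 0"
      using assms by auto
    then show "DERIV (\<lambda>x. ln (1 + x) / ln 2) x :> 1 / (ln 2 * (1 + x))"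
      by (auto intro!: derivative_eq_intros)
    show "0 \<le> 1 / (ln 2 * (1 + x))"
      using \<open>1 + x > 0\<close> by simp
  qed (use assms in auto)
  finally show ?thesis
    by (simp add: diff_divide_distrib)
qed

lemma measure_gauss_measure_segment:
  fixes x y :: real
  assumes "x \<in> {0..1}" "y \<in> {0..1}"
    and "open_segment x y \<subseteq> S" "S \<subseteq> closed_segment x y"
  shows "measure gauss_measure S = \<bar>ln (1 + y) - ln (1 + x)\<bar> / ln 2"
proof -
  define l r where "l = min x y" and "r = max x y"
  have lr: "0 \<le> l" "l \<le> r" "r \<le> 1"
    using assms(1,2) by (auto simp: l_def r_def)
  have segs: "open_segment x y = {l<..<r}" "closed_segment x y = {l..r}"
    by (auto simp: open_segment_eq_real_ivl closed_segment_eq_real_ivl l_def r_def)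
  have "S = {l<..<r} \<union> (S \<inter> {l, r})"
    using assms(3,4) segs by auto
  also have "\<dots> \<in> sets gauss_measure"
    using finite_imp_null_set_gauss_measure[of "S \<inter> {l, r}"] by auto
  finally have S: "S \<in> sets gauss_measure" .
  have "{l..r} - S \<in> null_sets gauss_measure"
  proof (rule null_sets_subset)
    show "{l, r} \<in> null_sets gauss_measure"
      by (rule finite_imp_null_set_gauss_measure) simp
    show "{l..r} - S \<in> sets gauss_measure"
      using S by simp
    show "{l..r} - S \<subseteq> {l, r}"
      using assms(3) segs(1) by auto
  qed
  from emeasure_Un_null_set[OF S this]
  have "emeasure gauss_measure S = emeasure gauss_measure {l..r}"
    using assms(4) segs(2) by (simp add: Un_absorb1)
  also have "\<dots> = ennreal (\<bar>ln (1 + y) - ln (1 + x)\<bar> / ln 2)"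
    unfolding emeasure_gauss_measure_Icc[OF lr] using assms(1,2)
    by (auto simp: l_def r_def min_def max_def)
  finally show ?thesis
    by (simp add: measure_def)
qed

lemma measure_gauss_cylinder:
  assumes "zs \<noteq> []" "0 \<notin> set zs"
  shows "measure gauss_measure (cylinder zs)
       = \<bar>ln (1 + cf_branch zs 1) - ln (1 + cf_branch zs 0)\<bar> / ln 2"
  using cylinder_segments[OF assms] cf_branch_bounds[OF assms(2)]
  by (intro measure_gauss_measure_segment) auto

text \<open>The quadruple (p_n, p_{n-1}, q_n, q_{n-1}) of numerators and denominators of the last two
  convergents of [0; a_1, \<dots>, a_n]; the recursion prepends a_1.\<close>
fun cf_convergents :: "nat list \<Rightarrow> real \<times> real \<times> real \<times> real" where
  "cf_convergents [] = (0, 1, 1, 0)"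
| "cf_convergents (a # as) =
    (case cf_convergents as of (p, p', q, q') \<Rightarrow> (q, q', real a * q + p, real a * q' + p'))"

lemma cf_convergents_det:
  "cf_convergents zs = (p, p', q, q') \<Longrightarrow> p' * q - p * q' = (-1) ^ length zs"
proof (induct zs arbitrary: p p' q q')
  case (Cons a as)
  obtain p0 p0' q0 q0' where "cf_convergents as = (p0, p0', q0, q0')"
    by (cases "cf_convergents as") auto
  with Cons show ?case
    by (auto simp: algebra_simps)
qed simp

lemma cf_convergents_nonneg:
  "0 \<notin> set zs \<Longrightarrow> cf_convergents zs = (p, p', q, q') \<Longrightarrow> 0 \<le> p \<and> 0 \<le> p' \<and> 1 \<le> q \<and> 0 \<le> q'"
proof (induct zs arbitrary: p p' q q')
  case (Cons a as)
  obtain p0 p0' q0 q0' where conv: "cf_convergents as = (p0, p0', q0, q0')"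
    by (cases "cf_convergents as") auto
  have "1 * 1 \<le> real a * q0"
    using Cons conv by (intro mult_mono) auto
  with Cons conv show ?case
    by auto
qed simp

lemma cf_convergents_le:
  "zs \<noteq> [] \<Longrightarrow> 0 \<notin> set zs \<Longrightarrow> cf_convergents zs = (p, p', q, q') \<Longrightarrow> p' \<le> p \<and> q' \<le> q"
proof (induct zs arbitrary: p p' q q' rule: list_nonempty_induct)
  case (cons a as)
  obtain p0 p0' q0 q0' where conv: "cf_convergents as = (p0, p0', q0, q0')"
    by (cases "cf_convergents as") auto
  have "q0' \<le> q0" "p0' \<le> p0"
    using cons conv by auto
  moreover have "real a * q0' \<le> real a * q0"
    using \<open>q0' \<le> q0\<close> by (simp add: mult_left_mono)
  moreover have "p = q0" "p' = q0'" "q = real a * q0 + p0" "q' = real a * q0' + p0'"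
    using cons.prems(2) conv by auto
  ultimately show ?case
    by linarith
qed auto

lemma cf_branch_convergents:
  assumes "0 \<notin> set zs" "cf_convergents zs = (p, p', q, q')" "0 \<le> t"
  shows "cf_branch zs t = (p + t * p') / (q + t * q')"
  using assms
proof (induct zs arbitrary: p p' q q')
  case (Cons a as)
  obtain p0 p0' q0 q0' where conv: "cf_convergents as = (p0, p0', q0, q0')"
    by (cases "cf_convergents as") auto
  have "1 \<le> q0" "0 \<le> t * q0'"
    using cf_convergents_nonneg[of as] Cons conv by auto
  then have "q0 + t * q0' > 0"
    by linarith
  have "cf_branch (a # as) t = 1 / (real a + (p0 + t * p0') / (q0 + t * q0'))"
    using Cons conv by simp
  also have "\<dots> = (q0 + t * q0') / ((real a * q0 + p0) + t * (real a * q0' + p0'))"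
    using \<open>q0 + t * q0' > 0\<close> by (simp add: field_simps)
  finally show ?case
    using Cons.prems(2) conv by auto
qed simp

lemma cf_branch_0_neq_1:
  assumes "0 \<notin> set zs"
  shows "cf_branch zs 0 \<noteq> cf_branch zs 1"
proof
  obtain p p' q q' where conv: "cf_convergents zs = (p, p', q, q')"
    by (cases "cf_convergents zs") auto
  have "q > 0" "q + q' > 0"
    using cf_convergents_nonneg[OF assms conv] by auto
  moreover assume "cf_branch zs 0 = cf_branch zs 1"
  ultimately have "p' * q - p * q' = 0"
    using cf_branch_convergents[OF assms conv] by (simp add: field_simps)
  then show False
    using cf_convergents_det[OF conv] by simp
qed

lemma measure_gauss_cylinder_pos:
  assumes "zs \<noteq> []" "0 \<notin> set zs"
  shows "measure gauss_measure (cylinder zs) > 0"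
  using measure_gauss_cylinder[OF assms] cf_branch_0_neq_1[OF assms(2)]
    cf_branch_bounds[OF assms(2), of 0] cf_branch_bounds[OF assms(2), of 1]
  by simp

lemma ln_add_one_ge:
  fixes x :: real
  assumes "0 \<le> x"
  shows "2 * x / (2 + x) \<le> ln (1 + x)"
proof -
  have "(\<lambda>u. ln (1 + u) - 2 * u / (2 + u)) 0 \<le> (\<lambda>u. ln (1 + u) - 2 * u / (2 + u)) x"
  proof (rule DERIV_nonneg_imp_nondecreasing[OF assms])
    fix u :: real assume "0 \<le> u" "u \<le> x"
    then have "DERIV (\<lambda>u. ln (1 + u) - 2 * u / (2 + u)) u :> 1 / (1 + u) - 4 / (2 + u)\<^sup>2"
      by (auto intro!: derivative_eq_intros simp: power2_eq_square)
    moreover have "1 / (1 + u) - 4 / (2 + u)\<^sup>2 = u\<^sup>2 / ((1 + u) * (2 + u)\<^sup>2)"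
      using \<open>0 \<le> u\<close> by (simp add: divide_simps) (simp add: power2_eq_square algebra_simps)
    ultimately show "\<exists>y. DERIV (\<lambda>u. ln (1 + u) - 2 * u / (2 + u)) u :> y \<and> y \<ge> 0"
      using \<open>0 \<le> u\<close> by fastforce
  qed
  then show ?thesis
    by simp
qed

text \<open>The linear functions X + t X' and Y + t Y' below arise as numerator and denominator of
  1 + (p + t p') / (q + t q'), up to swapping them.\<close>

lemma unimodular_log_ratio_diff:
  fixes X X' Y Y' :: real
  assumes "0 < X" "0 \<le> X'" "0 < Y" "0 \<le> Y'" "Y * X' - X * Y' = 1"
  shows "(ln (X + X') - ln (Y + Y')) - (ln X - ln Y) = ln (1 + 1 / (X * (Y + Y')))"
proof -
  have pos: "X + X' > 0" "Y + Y' > 0"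
    using assms by (auto intro: add_pos_nonneg)
  moreover have "X * (Y + Y') > 0"
    using assms by (simp add: add_pos_nonneg)
  ultimately have "1 + 1 / (X * (Y + Y')) = (X + X') * Y / (X * (Y + Y'))"
    using assms(5) by (simp add: field_simps)
  also have "ln \<dots> = (ln (X + X') - ln (Y + Y')) - (ln X - ln Y)"
    using pos assms by (simp add: ln_div ln_mult)
  finally show ?thesis
    by simp
qed

lemma unimodular_pointwise_bounds:
  fixes X X' Y Y' t :: real
  assumes X: "0 < X" "0 \<le> X'" "X' \<le> X" and Y: "0 < Y" "0 \<le> Y'" "Y' \<le> Y"
    and det: "Y * X' - X * Y' = 1" and t: "0 \<le> t" "t \<le> 1"
  defines "J \<equiv> ln (1 + 1 / (X * (Y + Y')))"
  shows "J * ((X + t * X') * (Y + t * Y')) \<le> 1 + t"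
    and "1 + t \<le> 2 * J * ((X + t * X') * (Y + t * Y'))"
proof -
  define N where "N = X * (Y + Y')"
  define P where "P = (X + t * X') * (Y + t * Y')"
  have N: "N > 0" and P: "P > 0"
    using X Y t by (auto simp: N_def P_def add_pos_nonneg)
  have "X + t * X' \<le> (1 + t) * X"
    using mult_right_mono[OF X(3) t(1)] by (simp add: algebra_simps)
  moreover have "Y + t * Y' \<le> Y + Y'"
    using Y t by (simp add: mult_left_le_one_le)
  ultimately have "P \<le> ((1 + t) * X) * (Y + Y')"
    unfolding P_def using X Y t by (intro mult_mono) auto
  then have "P / N \<le> 1 + t"
    using N by (simp add: N_def field_simps)
  moreover have "J \<le> 1 / N"
    unfolding J_def N_def using ln_add_one_self_le_self X Y by (simp add: add_pos_nonneg)
  then have "J * P \<le> 1 / N * P"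
    using P by (intro mult_right_mono) auto
  ultimately show "J * P \<le> 1 + t"
    by simp
  txt \<open>4P exceeds (1 + t)(2N + 1) by terms that are nonnegative because X (Y - Y') \<ge> Y X' - X Y' = 1;
    together with ln (1 + u) \<ge> 2u / (2 + u) for u = 1/N this gives the lower bound.\<close>
  have "X * (Y - Y') \<ge> 1"
    using det mult_left_mono[OF X(3), of Y] Y by (simp add: algebra_simps)
  then have "(1 - t) * (2 * X * (Y - Y') - 1) \<ge> 0" "t * (4 * X * Y' + 2) \<ge> 0"
      "4 * t\<^sup>2 * X' * Y' \<ge> 0"
    using X Y t by auto
  moreover have "4 * P - ((1 + t) * (2 * N + 1) + (1 - t) * (2 * X * (Y - Y') - 1)
      + t * (4 * X * Y' + 2) + 4 * t\<^sup>2 * X' * Y') = 4 * t * (Y * X' - X * Y' - 1)"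
    unfolding P_def N_def by (simp add: algebra_simps power2_eq_square)
  ultimately have "(1 + t) * (2 * N + 1) \<le> 4 * P"
    using det by simp
  then have "1 + t \<le> 2 * (2 * (1 / N) / (2 + 1 / N)) * P"
    using N by (simp add: field_simps)
  moreover have "2 * (1 / N) / (2 + 1 / N) \<le> J"
    unfolding J_def using ln_add_one_ge[of "1 / N"] N by (simp add: N_def)
  then have "2 * (2 * (1 / N) / (2 + 1 / N)) * P \<le> 2 * J * P"
    using P by (intro mult_right_mono mult_left_mono) auto
  ultimately show "1 + t \<le> 2 * J * P"
    by linarith
qed

lemma DERIV_le_imp_diff_le:
  fixes f g f' g' :: "real \<Rightarrow> real"
  assumes "a \<le> b"
    and "\<And>t. a \<le> t \<Longrightarrow> t \<le> b \<Longrightarrow> DERIV f t :> f' t"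
    and "\<And>t. a \<le> t \<Longrightarrow> t \<le> b \<Longrightarrow> DERIV g t :> g' t"
    and "\<And>t. a \<le> t \<Longrightarrow> t \<le> b \<Longrightarrow> f' t \<le> g' t"
  shows "f b - f a \<le> g b - g a"
proof -
  have "(\<lambda>t. g t - f t) a \<le> (\<lambda>t. g t - f t) b"
  proof (rule DERIV_nonneg_imp_nondecreasing[OF assms(1)])
    fix t assume t: "a \<le> t" "t \<le> b"
    have "DERIV (\<lambda>t. g t - f t) t :> g' t - f' t"
      by (rule DERIV_diff[OF assms(3)[OF t] assms(2)[OF t]])
    moreover have "g' t - f' t \<ge> 0"
      using assms(4)[OF t] by simp
    ultimately show "\<exists>y. DERIV (\<lambda>t. g t - f t) t :> y \<and> y \<ge> 0"
      by blast
  qed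
  then show ?thesis
    by simp
qed

lemma unimodular_log_ratio_bounds:
  fixes X X' Y Y' s s' :: real
  assumes X: "0 < X" "0 \<le> X'" "X' \<le> X" and Y: "0 < Y" "0 \<le> Y'" "Y' \<le> Y"
    and det: "Y * X' - X * Y' = 1" and s: "0 \<le> s" "s \<le> s'" "s' \<le> 1"
  defines "h \<equiv> \<lambda>t. ln (X + t * X') - ln (Y + t * Y')"
  shows "0 < h 1 - h 0"
    and "(h 1 - h 0) * (ln (1 + s') - ln (1 + s)) \<le> h s' - h s"
    and "h s' - h s \<le> 2 * (h 1 - h 0) * (ln (1 + s') - ln (1 + s))"
proof -
  define J where "J = ln (1 + 1 / (X * (Y + Y')))"
  have J: "h 1 - h 0 = J"
    unfolding h_def J_def using unimodular_log_ratio_diff[OF X(1,2) Y(1,2) det] by simp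
  then show "0 < h 1 - h 0"
    unfolding J_def using X Y by (simp add: add_pos_nonneg)
  define P where "P t = (X + t * X') * (Y + t * Y')" for t
  have dh: "DERIV h t :> 1 / P t" if "0 \<le> t" for t
  proof -
    have "X + t * X' > 0" "Y + t * Y' > 0"
      using X Y that by (auto intro: add_pos_nonneg)
    moreover have "X' / (X + t * X') - Y' / (Y + t * Y') = (Y * X' - X * Y') / P t"
      using calculation by (simp add: P_def field_simps)
    ultimately show ?thesis
      unfolding h_def det by (auto intro!: derivative_eq_intros)
  qed
  have dg: "DERIV (\<lambda>t. c * ln (1 + t)) t :> c * (1 / (1 + t))" if "0 \<le> t" for c t :: real
    using that by (auto intro!: derivative_eq_intros)
  have P: "P t > 0" if "0 \<le> t" for t
    using X Y that by (simp add: P_def add_pos_nonneg)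
  have "J * (1 / (1 + t)) \<le> 1 / P t" "1 / P t \<le> 2 * J * (1 / (1 + t))"
    if "s \<le> t" "t \<le> s'" for t
    using unimodular_pointwise_bounds[OF X Y det, of t] P[of t] that s
    by (simp_all add: J_def P_def field_simps)
  then have "J * ln (1 + s') - J * ln (1 + s) \<le> h s' - h s"
    and "h s' - h s \<le> 2 * J * ln (1 + s') - 2 * J * ln (1 + s)"
    using s by (auto intro!: DERIV_le_imp_diff_le[OF s(2)] dg dh)
  then show "(h 1 - h 0) * (ln (1 + s') - ln (1 + s)) \<le> h s' - h s"
    and "h s' - h s \<le> 2 * (h 1 - h 0) * (ln (1 + s') - ln (1 + s))"
    unfolding J by (simp_all add: algebra_simps)
qed

lemma ln_one_add_cf_branch_unimodular:
  assumes "xs \<noteq> []" "0 \<notin> set xs"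
  obtains X X' Y Y' :: real
  where "0 < X" "0 \<le> X'" "X' \<le> X" "0 < Y" "0 \<le> Y'" "Y' \<le> Y" "Y * X' - X * Y' = 1"
    and "\<And>a b. 0 \<le> a \<Longrightarrow> 0 \<le> b \<Longrightarrow>
      \<bar>ln (1 + cf_branch xs b) - ln (1 + cf_branch xs a)\<bar>
      = \<bar>(ln (X + b * X') - ln (Y + b * Y')) - (ln (X + a * X') - ln (Y + a * Y'))\<bar>"
proof -
  obtain p p' q q' where conv: "cf_convergents xs = (p, p', q, q')"
    by (cases "cf_convergents xs") auto
  have bounds: "0 \<le> p" "0 \<le> p'" "1 \<le> q" "0 \<le> q'" "p' \<le> p" "q' \<le> q"
    using cf_convergents_nonneg[OF assms(2) conv] cf_convergents_le[OF assms conv] by auto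
  have det: "(p' + q') * q - q' * (p + q) = (-1) ^ length xs"
    using cf_convergents_det[OF conv] by (simp add: algebra_simps)
  define f where "f t = ln (1 + cf_branch xs t)" for t
  have f_eq: "f t = ln ((p + q) + t * (p' + q')) - ln (q + t * q')" if "0 \<le> t" for t
  proof -
    have "q + t * q' > 0" "(p + q) + t * (p' + q') > 0"
      using bounds that by (auto intro: add_pos_nonneg)
    moreover have "1 + cf_branch xs t = ((p + q) + t * (p' + q')) / (q + t * q')"
      using cf_branch_convergents[OF assms(2) conv that] calculation by (simp add: field_simps)
    ultimately show ?thesis
      unfolding f_def by (simp add: ln_div)
  qed
  show ?thesis
  proof (cases "even (length xs)")
    case True
    show ?thesis
      by (rule that[of "p + q" "p' + q'" q q'])
        (use bounds det True f_eq in \<open>auto simp: mult.commute f_def[symmetric]\<close>)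
  next
    case False
    show ?thesis
    proof (rule that[of q q' "p + q" "p' + q'"])
      show "(p + q) * q' - q * (p' + q') = 1"
        using det False by (simp add: algebra_simps)
      fix a b :: real assume "0 \<le> a" "0 \<le> b"
      then show "\<bar>ln (1 + cf_branch xs b) - ln (1 + cf_branch xs a)\<bar> =
          \<bar>(ln (q + b * q') - ln (p + q + b * (p' + q'))) - (ln (q + a * q') - ln (p + q + a * (p' + q')))\<bar>"
        using f_eq[of a] f_eq[of b] by (simp add: f_def)
    qed (use bounds in auto)
  qed
qed

lemma cf_branch_log_distortion:
  assumes "xs \<noteq> []" "0 \<notin> set xs" and s: "s \<in> {0..1}" "s' \<in> {0..1}"
  defines "f \<equiv> \<lambda>t. ln (1 + cf_branch xs t)"
  shows "\<bar>f 1 - f 0\<bar> * \<bar>ln (1 + s') - ln (1 + s)\<bar> \<le> \<bar>f s' - f s\<bar>"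
    and "\<bar>f s' - f s\<bar> \<le> 2 * \<bar>f 1 - f 0\<bar> * \<bar>ln (1 + s') - ln (1 + s)\<bar>"
proof -
  obtain X X' Y Y' where X: "0 < X" "0 \<le> X'" "X' \<le> X" and Y: "0 < Y" "0 \<le> Y'" "Y' \<le> Y"
    and unimodular: "Y * X' - X * Y' = 1"
    and abs_f: "\<And>a b. 0 \<le> a \<Longrightarrow> 0 \<le> b \<Longrightarrow>
       \<bar>f b - f a\<bar> = \<bar>(ln (X + b * X') - ln (Y + b * Y')) - (ln (X + a * X') - ln (Y + a * Y'))\<bar>"
    using ln_one_add_cf_branch_unimodular[OF assms(1,2)] unfolding f_def by blast
  define h where "h t = ln (X + t * X') - ln (Y + t * Y')" for t
  have ordered: "\<bar>f 1 - f 0\<bar> * \<bar>ln (1 + b) - ln (1 + a)\<bar> \<le> \<bar>f b - f a\<bar>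
      \<and> \<bar>f b - f a\<bar> \<le> 2 * \<bar>f 1 - f 0\<bar> * \<bar>ln (1 + b) - ln (1 + a)\<bar>"
    if "0 \<le> a" "a \<le> b" "b \<le> 1" for a b
  proof -
    note hb = unimodular_log_ratio_bounds[OF X Y unimodular that, folded h_def]
    have "\<bar>f 1 - f 0\<bar> = h 1 - h 0"
      using abs_f[of 0 1] hb(1) by (simp add: h_def)
    moreover have "\<bar>ln (1 + b) - ln (1 + a)\<bar> = ln (1 + b) - ln (1 + a)"
      using that by simp
    moreover have "0 \<le> (h 1 - h 0) * (ln (1 + b) - ln (1 + a))"
      using hb(1) that by simp
    then have "\<bar>f b - f a\<bar> = h b - h a"
      using abs_f[of a b] hb(2) that by (simp add: h_def)
    ultimately show ?thesis
      using hb(2,3) by simp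
  qed
  show "\<bar>f 1 - f 0\<bar> * \<bar>ln (1 + s') - ln (1 + s)\<bar> \<le> \<bar>f s' - f s\<bar>"
    and "\<bar>f s' - f s\<bar> \<le> 2 * \<bar>f 1 - f 0\<bar> * \<bar>ln (1 + s') - ln (1 + s)\<bar>"
    using ordered[of s s'] ordered[of s' s] s by (cases "s \<le> s'"; simp add: abs_minus_commute)+
qed

lemma measure_gauss_cylinder_append:
  assumes xs: "xs \<noteq> []" "0 \<notin> set xs" and ys: "ys \<noteq> []" "0 \<notin> set ys"
  shows "ln 2 * measure gauss_measure (cylinder xs) * measure gauss_measure (cylinder ys)
        \<le> measure gauss_measure (cylinder (xs @ ys))"
    and "measure gauss_measure (cylinder (xs @ ys))
        \<le> 2 * ln 2 * measure gauss_measure (cylinder xs) * measure gauss_measure (cylinder ys)"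
proof -
  define f where "f t = ln (1 + cf_branch xs t)" for t
  define s s' where "s = cf_branch ys 0" and "s' = cf_branch ys 1"
  have s: "s \<in> {0..1}" "s' \<in> {0..1}"
    using cf_branch_bounds[OF ys(2)] by (auto simp: s_def s'_def)
  have "measure gauss_measure (cylinder (xs @ ys)) = \<bar>f s' - f s\<bar> / ln 2"
    using measure_gauss_cylinder[of "xs @ ys"] xs ys by (simp add: cf_branch_append f_def s_def s'_def)
  moreover have "ln 2 * measure gauss_measure (cylinder xs) * measure gauss_measure (cylinder ys)
      = \<bar>f 1 - f 0\<bar> * \<bar>ln (1 + s') - ln (1 + s)\<bar> / ln 2"
    using measure_gauss_cylinder[OF xs] measure_gauss_cylinder[OF ys] by (simp add: f_def s_def s'_def)
  moreover note cf_branch_log_distortion[OF xs s, folded f_def]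
  ultimately show "ln 2 * measure gauss_measure (cylinder xs) * measure gauss_measure (cylinder ys)
        \<le> measure gauss_measure (cylinder (xs @ ys))"
    and "measure gauss_measure (cylinder (xs @ ys))
        \<le> 2 * ln 2 * measure gauss_measure (cylinder xs) * measure gauss_measure (cylinder ys)"
    by (auto intro: divide_right_mono simp: mult.assoc)
qed

lemma admissible_iff: "admissible xs \<longleftrightarrow> xs \<noteq> [] \<and> 0 \<notin> set xs"
  by (auto simp: admissible_def in_set_conv_nth Suc_le_eq)

lemma gauss_ratio_bounds:
  assumes "admissible xs" "admissible ys"
  shows "ln 2 \<le> gauss_ratio xs ys" "gauss_ratio xs ys \<le> 2 * ln 2"
proof -
  have xs: "xs \<noteq> []" "0 \<notin> set xs" and ys: "ys \<noteq> []" "0 \<notin> set ys"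
    using assms by (auto simp: admissible_iff)
  have "measure gauss_measure (cylinder xs) * measure gauss_measure (cylinder ys) > 0"
    using measure_gauss_cylinder_pos[OF xs] measure_gauss_cylinder_pos[OF ys] by simp
  then show "ln 2 \<le> gauss_ratio xs ys" "gauss_ratio xs ys \<le> 2 * ln 2"
    using measure_gauss_cylinder_append[OF xs ys] unfolding gauss_ratio_def
    by (simp_all add: field_simps)
qed

lemma gauss_ratio_singletons_tendsto: "(\<lambda>n. gauss_ratio [n] [n]) \<longlonglongrightarrow> ln 2"
proof (rule Lim_transform_eventually)
  let ?len1 = "\<lambda>n. \<bar>ln (1 + 1 / (real n + 1)) - ln (1 + 1 / real n)\<bar>"
  let ?len2 = "\<lambda>n. \<bar>ln (1 + 1 / (real n + 1 / (real n + 1))) - ln (1 + 1 / (real n + 1 / real n))\<bar>"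
  show "(\<lambda>n. ln 2 * ?len2 n / (?len1 n * ?len1 n)) \<longlonglongrightarrow> ln 2"
    by real_asymp
  have ratio_eq: "gauss_ratio [n] [n] = ln 2 * ?len2 n / (?len1 n * ?len1 n)" if "n \<ge> 1" for n
    using that measure_gauss_cylinder[of "[n]"] measure_gauss_cylinder[of "[n, n]"]
    by (simp add: gauss_ratio_def)
  show "\<forall>\<^sub>F n in sequentially. ln 2 * ?len2 n / (?len1 n * ?len1 n) = gauss_ratio [n] [n]"
    using eventually_ge_at_top[of 1] by (rule eventually_mono) (metis ratio_eq)
qed

lemma gauss_ratio_singleton_pair_tendsto: "(\<lambda>n. gauss_ratio [n] [1, n]) \<longlonglongrightarrow> 2 * ln 2"
proof (rule Lim_transform_eventually)
  let ?len1 = "\<lambda>n. \<bar>ln (1 + 1 / (real n + 1)) - ln (1 + 1 / real n)\<bar>"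
  let ?len2 = "\<lambda>n. \<bar>ln (1 + 1 / (1 + 1 / (real n + 1))) - ln (1 + 1 / (1 + 1 / real n))\<bar>"
  let ?len3 = "\<lambda>n. \<bar>ln (1 + 1 / (real n + 1 / (1 + 1 / (real n + 1))))
      - ln (1 + 1 / (real n + 1 / (1 + 1 / real n)))\<bar>"
  show "(\<lambda>n. ln 2 * ?len3 n / (?len1 n * ?len2 n)) \<longlonglongrightarrow> 2 * ln 2"
    by real_asymp
  have ratio_eq: "gauss_ratio [n] [1, n] = ln 2 * ?len3 n / (?len1 n * ?len2 n)" if "n \<ge> 1" for n
    using that measure_gauss_cylinder[of "[n]"] measure_gauss_cylinder[of "[1, n]"]
      measure_gauss_cylinder[of "[n, 1, n]"]
    by (simp add: gauss_ratio_def)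
  show "\<forall>\<^sub>F n in sequentially. ln 2 * ?len3 n / (?len1 n * ?len2 n) = gauss_ratio [n] [1, n]"
    using eventually_ge_at_top[of 1] by (rule eventually_mono) (metis ratio_eq)
qed

theorem lemma4:
  shows "(\<forall>xs ys. admissible xs \<and> admissible ys \<longrightarrow>
            ln 2 \<le> gauss_ratio xs ys \<and> gauss_ratio xs ys \<le> 2 * ln 2)
       \<and> (\<forall>c. c > ln 2 \<longrightarrow> (\<exists>xs ys. admissible xs \<and> admissible ys \<and> gauss_ratio xs ys < c))
       \<and> (\<forall>c. c < 2 * ln 2 \<longrightarrow> (\<exists>xs ys. admissible xs \<and> admissible ys \<and> gauss_ratio xs ys > c))"
proof (intro conjI allI impI)
  fix xs ys assume "admissible xs \<and> admissible ys"
  then show "ln 2 \<le> gauss_ratio xs ys" "gauss_ratio xs ys \<le> 2 * ln 2"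
    using gauss_ratio_bounds by auto
next
  fix c :: real assume "c > ln 2"
  then have "\<forall>\<^sub>F n in sequentially. 1 \<le> n \<and> gauss_ratio [n] [n] < c"
    by (intro eventually_conj eventually_ge_at_top order_tendstoD(2)[OF gauss_ratio_singletons_tendsto])
  then obtain n where "1 \<le> n" "gauss_ratio [n] [n] < c"
    by (auto simp: eventually_sequentially)
  then show "\<exists>xs ys. admissible xs \<and> admissible ys \<and> gauss_ratio xs ys < c"
    by (intro exI[of _ "[n]"]) (auto simp: admissible_iff)
next
  fix c :: real assume "c < 2 * ln 2"
  then have "\<forall>\<^sub>F n in sequentially. 1 \<le> n \<and> gauss_ratio [n] [1, n] > c"
    by (intro eventually_conj eventually_ge_at_top order_tendstoD(1)[OF gauss_ratio_singleton_pair_tendsto])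
  then obtain n where "1 \<le> n" "gauss_ratio [n] [1, n] > c"
    by (auto simp: eventually_sequentially)
  then show "\<exists>xs ys. admissible xs \<and> admissible ys \<and> gauss_ratio xs ys > c"
    by (intro exI[of _ "[n]"] exI[of _ "[1, n]"]) (auto simp: admissible_iff)
qed

end
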